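(* For every integer $n\ge 1$, $$a_n\ge\max\{\tau(n),\tau(2n-1),\tau_o(n+1)\},$$ and more precisely $$a_n\ge \tau(n)+\tau(2n-1)+\tau_o(n+1)-3-\delta_{n\equiv 0 \bmod 2}-\delta_{n\equiv -1\bmod 3}.$$
   Context: For an integer $n\ge1$, $a_n$ denotes the number of integers $x$ with $0\le x\le n-1$ for which there exists a positive integer $h$ with $h\mid x$ and $(2x+1)\mid(2n-2h+1)$ (every positive integer divides $0$). $\tau(m)$ is the number of positive divisors of $m$, $\tau_o(m)$ is the number of odd positive divisors of $m$, and $\delta_P$ equals $1$ if the condition $P$ holds and $0$ otherwise. *)

theory Defs
  imports Main
begin

definition a_seq :: "nat \<Rightarrow> nat" where
  "a_seq n = card {x::nat. x \<le> n - 1 \<and>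
      (\<exists>h::nat. 0 < h \<and> h dvd x \<and> int (2*x+1) dvd (2 * int n - 2 * int h + 1))}"

definition tau :: "nat \<Rightarrow> nat" where
  "tau m = card {d::nat. 0 < d \<and> d dvd m}"

definition tau_odd :: "nat \<Rightarrow> nat" where
  "tau_odd m = card {d::nat. 0 < d \<and> d dvd m \<and> odd d}"

definition delta :: "bool \<Rightarrow> int" where
  "delta P = (if P then 1 else 0)"

end

theory Submission
  imports Defs
begin

text \<open>Three families of elements of the set counted by \<^term>\<open>a_seq n\<close> are easy to
  write down: \<open>x = n - d\<close> for a divisor \<open>d\<close> of \<open>n\<close> (take \<open>h = d\<close>), \<open>x = (d - 1)/2\<close> for a
  divisor \<open>d\<close> of \<open>2n - 1\<close> (take \<open>h = 1\<close>), and \<open>x = (d - 1)/2\<close> for an odd divisor \<open>d\<close> of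
  \<open>n + 1\<close> (take \<open>h = x\<close>, as \<open>2n - 2x + 1 = 2(n + 1) - d\<close>). They have \<open>\<tau>(n)\<close>, \<open>\<tau>(2n - 1)\<close>
  and \<open>\<tau>\<^sub>o(n + 1)\<close> elements. A proper divisor is at most half of what it divides, which
  forces the pairwise overlaps to be tiny: apart from \<open>0\<close>, the first two share at most
  \<open>n - 1\<close>, the first and third at most \<open>n/2\<close> (\<open>n\<close> even), and the last two at most \<open>1\<close>,
  since their common divisors divide \<open>3\<close>. Inclusion-exclusion gives the bound.\<close>

definition a_set :: "nat \<Rightarrow> nat set" where
  "a_set n = {x. x \<le> n - 1 \<and>
      (\<exists>h. 0 < h \<and> h dvd x \<and> int (2*x+1) dvd (2 * int n - 2 * int h + 1))}"

definition divisor_complements :: "nat \<Rightarrow> nat set" where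
  "divisor_complements n = {x. x < n \<and> (n - x) dvd n}"

definition odd_divisor_halves :: "nat \<Rightarrow> nat set" where
  "odd_divisor_halves m = {x. (2*x+1) dvd m}"

lemma a_seq_eq_card_a_set: "a_seq n = card (a_set n)"
  by (simp add: a_seq_def a_set_def)

lemma finite_a_set: "finite (a_set n)"
  by (rule finite_subset[of _ "{..n - 1}"]) (auto simp: a_set_def)

lemma nat_dvd_eq_of_less_double:
  fixes d n :: nat
  assumes "d dvd n" "0 < n" "n < 2 * d"
  shows "d = n"
proof -
  obtain k where k: "n = d * k" using assms(1) by blast
  with assms(2,3) have "k = 1" by (cases k) auto
  with k show ?thesis by simp
qed

lemma card_Un3:
  assumes "finite A" "finite B" "finite C"
  shows "card A + card B + card C = card (A \<union> B \<union> C) + card (A \<inter> B) + card ((A \<union> B) \<inter> C)"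
  using card_Un_Int[OF assms(1,2)] card_Un_Int[of "A \<union> B" C] assms by simp

lemma card_divisor_complements:
  assumes "0 < n"
  shows "card (divisor_complements n) = tau n"
proof -
  have "inj_on (\<lambda>x. n - x) (divisor_complements n)"
    by (auto simp: inj_on_def divisor_complements_def)
  moreover have "(\<lambda>x. n - x) ` divisor_complements n = {d. 0 < d \<and> d dvd n}"
  proof (intro equalityI subsetI)
    fix d assume d: "d \<in> {d. 0 < d \<and> d dvd n}"
    then have "d \<le> n" using assms by (simp add: dvd_imp_le)
    with d show "d \<in> (\<lambda>x. n - x) ` divisor_complements n"
      by (auto simp: divisor_complements_def image_iff intro!: exI[of _ "n - d"])
  qed (auto simp: divisor_complements_def)
  ultimately show ?thesis
    unfolding tau_def by (metis card_image)
qed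

lemma card_odd_divisor_halves: "card (odd_divisor_halves m) = tau_odd m"
proof -
  have "inj_on (\<lambda>x. 2*x+1) (odd_divisor_halves m)"
    by (auto simp: inj_on_def)
  moreover have "(\<lambda>x. 2*x+1) ` odd_divisor_halves m = {d. 0 < d \<and> d dvd m \<and> odd d}"
    by (auto simp: odd_divisor_halves_def image_iff elim!: oddE)
  ultimately show ?thesis
    unfolding tau_odd_def by (metis card_image)
qed

lemma tau_odd_eq_tau: "odd m \<Longrightarrow> tau_odd m = tau m"
  unfolding tau_odd_def tau_def by (metis dvd_trans)

lemma divisor_complements_subset_a_set: "divisor_complements n \<subseteq> a_set n"
proof
  fix x assume "x \<in> divisor_complements n"
  then have x: "x < n" "(n - x) dvd n" by (simp_all add: divisor_complements_def)
  have "0 < n - x" "x \<le> n - 1" using x(1) by simp_all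
  moreover have "(n - x) dvd x"
    using dvd_diff_nat[OF x(2) dvd_refl] x(1) by simp
  moreover have "2 * int n - 2 * int (n - x) + 1 = int (2*x+1)"
    using x(1) by simp
  then have "int (2*x+1) dvd 2 * int n - 2 * int (n - x) + 1"
    by (simp only: dvd_refl)
  ultimately show "x \<in> a_set n"
    unfolding a_set_def by blast
qed

lemma odd_divisor_halves_2n_minus_1_subset_a_set:
  assumes "0 < n"
  shows "odd_divisor_halves (2*n - 1) \<subseteq> a_set n"
proof
  fix x assume "x \<in> odd_divisor_halves (2*n - 1)"
  then have dvd: "(2*x+1) dvd 2*n - 1" by (simp add: odd_divisor_halves_def)
  then have "2*x+1 \<le> 2*n - 1" using assms by (simp add: dvd_imp_le)
  moreover have "int (2*x+1) dvd int (2*n - 1)"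
    using dvd by (simp only: of_nat_dvd_iff)
  moreover have "int (2*n - 1) = 2 * int n - 2 * int 1 + 1"
    using assms by simp
  ultimately show "x \<in> a_set n"
    by (auto simp: a_set_def intro!: exI[of _ 1])
qed

lemma odd_divisor_halves_n_plus_1_subset_a_set:
  assumes "0 < n"
  shows "odd_divisor_halves (n + 1) \<subseteq> a_set n"
proof
  fix x assume "x \<in> odd_divisor_halves (n + 1)"
  then have dvd: "(2*x+1) dvd n + 1" by (simp add: odd_divisor_halves_def)
  then have "x \<le> n - 1" using dvd_imp_le[OF dvd] assms by simp
  show "x \<in> a_set n"
  proof (cases "x = 0")
    case True
    then show ?thesis by (simp add: a_set_def exI[of _ 1])
  next
    case False
    have "int (2*x+1) dvd int (n + 1)"
      using dvd by (simp only: of_nat_dvd_iff)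
    then have "int (2*x+1) dvd 2 * int (n + 1) - int (2*x+1)"
      by (intro dvd_diff dvd_mult) simp_all
    also have "2 * int (n + 1) - int (2*x+1) = 2 * int n - 2 * int x + 1"
      by simp
    finally have "0 < x \<and> x dvd x \<and> int (2*x+1) dvd 2 * int n - 2 * int x + 1"
      using False by simp
    with \<open>x \<le> n - 1\<close> show ?thesis
      unfolding a_set_def by blast
  qed
qed

lemma divisor_complements_Int_odd_divisor_halves_2n_minus_1:
  "divisor_complements n \<inter> odd_divisor_halves (2*n - 1) \<subseteq> {0, n - 1}"
proof
  fix x assume "x \<in> divisor_complements n \<inter> odd_divisor_halves (2*n - 1)"
  then have x: "x < n" "(n - x) dvd n" "(2*x+1) dvd 2*n - 1"
    by (simp_all add: divisor_complements_def odd_divisor_halves_def)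
  show "x \<in> {0, n - 1}"
  proof (cases "x = 0")
    case False
    then have "\<not> n < 2 * (n - x)" using nat_dvd_eq_of_less_double[OF x(2)] x(1) by auto
    then have "n \<le> 2 * x" by linarith
    then have "2*x+1 = 2*n - 1" using nat_dvd_eq_of_less_double[OF x(3)] x(1) by simp
    then have "x = n - 1" by simp
    then show ?thesis by simp
  qed simp
qed

lemma divisor_complements_Int_odd_divisor_halves_n_plus_1:
  "divisor_complements n \<inter> odd_divisor_halves (n + 1) \<subseteq> insert 0 {x. even n \<and> x = n div 2}"
proof
  fix x assume "x \<in> divisor_complements n \<inter> odd_divisor_halves (n + 1)"
  then have x: "x < n" "(n - x) dvd n" "(2*x+1) dvd n + 1"
    by (simp_all add: divisor_complements_def odd_divisor_halves_def)
  show "x \<in> insert 0 {x. even n \<and> x = n div 2}"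
  proof (cases "x = 0")
    case False
    then have "\<not> n < 2 * (n - x)" using nat_dvd_eq_of_less_double[OF x(2)] x(1) by auto
    then have "n \<le> 2 * x" by linarith
    then have "2*x+1 = n + 1" using nat_dvd_eq_of_less_double[OF x(3)] by simp
    then have "n = 2 * x" by simp
    then show ?thesis by simp
  qed simp
qed

lemma odd_divisor_halves_2n_minus_1_Int_n_plus_1:
  assumes "0 < n"
  shows "odd_divisor_halves (2*n - 1) \<inter> odd_divisor_halves (n + 1) \<subseteq> insert 0 {x. n mod 3 = 2 \<and> x = 1}"
proof
  fix x assume "x \<in> odd_divisor_halves (2*n - 1) \<inter> odd_divisor_halves (n + 1)"
  then have x: "(2*x+1) dvd 2*n - 1" "(2*x+1) dvd n + 1"
    by (simp_all add: odd_divisor_halves_def)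
  have "(2*x+1) dvd 2 * (n + 1) - (2*n - 1)"
    using dvd_diff_nat[OF dvd_mult[OF x(2)] x(1)] .
  also have "2 * (n + 1) - (2*n - 1) = 3" using assms by simp
  finally have "x \<le> 1" by (auto dest: dvd_imp_le)
  then show "x \<in> insert 0 {x. n mod 3 = 2 \<and> x = 1}"
    using x(2) by (cases x) (auto, presburger)
qed

lemma card_divisor_complements_Int_odd_divisor_halves_2n_minus_1_le:
  "card (divisor_complements n \<inter> odd_divisor_halves (2*n - 1)) \<le> 2"
  using card_mono[OF _ divisor_complements_Int_odd_divisor_halves_2n_minus_1, of n]
  by (simp add: card_insert_if split: if_split_asm)

lemma card_Un_Int_odd_divisor_halves_n_plus_1_le:
  assumes "0 < n"
  shows "card ((divisor_complements n \<union> odd_divisor_halves (2*n - 1)) \<inter> odd_divisor_halves (n + 1))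
    \<le> 1 + of_bool (even n) + of_bool (n mod 3 = 2)"
proof -
  let ?E = "{x. even n \<and> x = n div 2} \<union> {x. n mod 3 = 2 \<and> x = 1}"
  have "(divisor_complements n \<union> odd_divisor_halves (2*n - 1)) \<inter> odd_divisor_halves (n + 1)
      \<subseteq> insert 0 ?E"
    using divisor_complements_Int_odd_divisor_halves_n_plus_1
      odd_divisor_halves_2n_minus_1_Int_n_plus_1[OF assms] by blast
  then have "card ((divisor_complements n \<union> odd_divisor_halves (2*n - 1)) \<inter> odd_divisor_halves (n + 1))
      \<le> card (insert 0 ?E)"
    by (intro card_mono) auto
  also have "\<dots> \<le> 1 + card ?E"
    by (simp add: card_insert_if)
  also have "card ?E \<le> of_bool (even n) + of_bool (n mod 3 = 2)"
    by (cases "even n"; cases "n mod 3 = 2") (auto simp: card_insert_if)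
  finally show ?thesis by simp
qed

theorem theorem10:
  fixes n :: nat
  assumes "n \<ge> 1"
  shows "a_seq n \<ge> Max {tau n, tau (2*n - 1), tau_odd (n + 1)}
     \<and> int (a_seq n) \<ge> int (tau n) + int (tau (2*n - 1)) + int (tau_odd (n + 1)) - 3
          - delta (n mod 2 = 0) - delta (n mod 3 = 2)"
proof -
  let ?A = "divisor_complements n"
  let ?B = "odd_divisor_halves (2*n - 1)"
  let ?C = "odd_divisor_halves (n + 1)"
  have n: "0 < n" using assms by simp
  have sub: "?A \<subseteq> a_set n" "?B \<subseteq> a_set n" "?C \<subseteq> a_set n"
    using divisor_complements_subset_a_set odd_divisor_halves_2n_minus_1_subset_a_set[OF n]
      odd_divisor_halves_n_plus_1_subset_a_set[OF n] .
  then have fin: "finite ?A" "finite ?B" "finite ?C"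
    using finite_subset finite_a_set by blast+
  have card: "card ?A = tau n" "card ?B = tau (2*n - 1)" "card ?C = tau_odd (n + 1)"
    using card_divisor_complements[OF n] card_odd_divisor_halves tau_odd_eq_tau[of "2*n - 1"] n
    by simp_all
  have "card ?A \<le> a_seq n" "card ?B \<le> a_seq n" "card ?C \<le> a_seq n"
    unfolding a_seq_eq_card_a_set using card_mono[OF finite_a_set] sub by blast+
  then have "Max {tau n, tau (2*n - 1), tau_odd (n + 1)} \<le> a_seq n"
    using card by simp
  moreover have "card (?A \<union> ?B \<union> ?C) \<le> a_seq n"
    unfolding a_seq_eq_card_a_set using sub by (intro card_mono finite_a_set) blast
  moreover have "int (card ((?A \<union> ?B) \<inter> ?C)) \<le> 1 + delta (n mod 2 = 0) + delta (n mod 3 = 2)"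
    using card_Un_Int_odd_divisor_halves_n_plus_1_le[OF n]
    by (auto simp: delta_def even_iff_mod_2_eq_zero split: if_splits)
  ultimately show ?thesis
    using card_Un3[OF fin] card_divisor_complements_Int_odd_divisor_halves_2n_minus_1_le[of n]
    unfolding card by linarith
qed

end
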